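(* Let $H_\alpha=-\Delta_\alpha+V$ be the Schrödinger operator with a periodic magnetic potential $\alpha$ and a periodic electric potential $V$ on a periodic graph $\mathcal G$. Then all spectral bands of $H_\alpha$ are degenerate (i.e. each is a single point) if and only if $\mathcal T_{\alpha,n,\mathrm m}=0$ for all $(n,\mathrm m)\in\{1,\dots,\nu\}\times(\mathbb Z^d\setminus\{0\})$, where $\mathcal T_{\alpha,n,\mathrm m}=\sum_{\mathbf c\in\widetilde{\mathcal C}_n^{\mathrm m}}\omega(\mathbf c)e^{-i\alpha(\mathbf c)}$.
   Context: Let $\Gamma\subset\mathbb R^d$ be a lattice with basis $\mathfrak a_1,\dots,\mathfrak a_d$ and fundamental cell $\Omega=\{\sum_sx_s\mathfrak a_s:(x_s)\in[0,1)^d\}$. Let $\mathcal G=(\mathcal V,\mathcal E)$ be a connected, locally finite, infinite graph embedded in $\mathbb R^d$ (loops, multiple edges allowed), invariant under $\Gamma$-translations, with finite quotient $\mathcal G_*=(\mathcal V_*,\mathcal E_* )$; $\nu=\#\mathcal V_*$. Oriented edges $\mathcal A,\mathcal A_*$; $\underline{\mathbf e}$ inverse; $\varkappa_x$ = number of oriented edges starting at $x$. Edge index: $x=x_0+[x]$, $x_0\in\mathcal V\cap\Omega$, $[x]\in\Gamma$ with coordinates $[x]_{\mathbb A}\in\mathbb Z^d$; $\tau((x,y))=[y]_{\mathbb A}-[x]_{\mathbb A}$, defined on $\mathcal A_*$. Periodic magnetic potential $\alpha:\mathcal A\to\mathbb R$ ($\alpha(\underline{\mathbf e})=-\alpha(\mathbf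 e)$, $\Gamma$-invariant); $V$ real $\Gamma$-periodic. $H_\alpha=-\Delta_\alpha+V$, $\Delta_\alpha=\varkappa-A_\alpha$, $(A_\alpha f)_x=\sum_{\mathbf e=(x,y)\in\mathcal A}e^{i\alpha(\mathbf e)}f_y$. Fiber operators $H_\alpha(k)=A_\alpha(k)-\varkappa+V$ on $\mathbb C^\nu$, $(A_\alpha(k)f)_x=\sum_{\mathbf e=(x,y)\in\mathcal A_*}e^{i(\alpha(\mathbf e)+\langle\tau(\mathbf e),k\rangle)}f_y$, $k\in\mathbb T^d=\mathbb R^d/(2\pi\mathbb Z)^d$, eigenvalues $\lambda_{\alpha,1}(k)\le\dots\le\lambda_{\alpha,\nu}(k)$; spectral bands $\sigma_j(H_\alpha)=\lambda_{\alpha,j}(\mathbb T^d)$. Cycles: ordered sequences of oriented edges $(\mathbf e_1,\dots,\mathbf e_n)$, $\mathbf e_s=(x_{s-1},x_s)$, $x_n=x_0$ (cyclic shifts distinct, backtracking allowed); index $\tau(\mathbf c)=\sum\tau(\mathbf e)$, flux $\alpha(\mathbf c)=(\sum\alpha(\mathbf e))\bmod2\pi$. Modified graph $\widetilde{\mathcal G}_*$: add at each $x\in\mathcal V_*$ one oriented loop $\mathbf e_x$ (single oriented edge) with $\tau(\mathbf e_x)=0$, $\alpha(\mathbf e_x)=0$; $\omega(\mathbf e)=1$ for $\mathbf e\in\mathcal A_*$, $\omega(\mathbf e_x)=V_x-\varkappa_x$, $\omega(\mathbf c)=\prod_s\omega(\mathbf e_s)$; $\widetilde{\mathcal C}_n^{\mathrm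 m}$ is the set of cycles of $\widetilde{\mathcal G}_*$ of length $n$ and index $\mathrm m$. *)

theory Defs
  imports "Jordan_Normal_Form.Char_Poly" "HOL-Library.Multiset"
    "HOL-Computational_Algebra.Polynomial"
begin

text \<open>
 Data of a Gamma-periodic graph, given through its finite quotient:
 vertices of the quotient are 0..<nu, oriented edges of the quotient form the
 finite set E, with source/target maps src, tgt, inversion inv,
 edge index tau (values in Z^d, d = CARD('d)), magnetic potential alpha,
 electric potential V.  Quasimomenta k are in R^d (the bands are images of
 2pi-periodic functions, so ranging over R^d or T^d gives the same sets).
\<close>

definition inner_ik :: "('d::finite \<Rightarrow> int) \<Rightarrow> ('d \<Rightarrow> real) \<Rightarrow> real" where
  "inner_ik m k = (\<Sum>i\<in>UNIV. of_int (m i) * k i)"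

definition kappa :: "'e set \<Rightarrow> ('e \<Rightarrow> nat) \<Rightarrow> nat \<Rightarrow> nat" where
  "kappa E src x = card {e\<in>E. src e = x}"

definition periodic_rel ::
  "'e set \<Rightarrow> ('e \<Rightarrow> nat) \<Rightarrow> ('e \<Rightarrow> nat) \<Rightarrow> ('e \<Rightarrow> 'd::finite \<Rightarrow> int)
   \<Rightarrow> ((nat \<times> ('d \<Rightarrow> int)) \<times> (nat \<times> ('d \<Rightarrow> int))) set" where
  "periodic_rel E src tgt tau =
     {((src e, a), (tgt e, (\<lambda>i. a i + tau e i))) | e a. e \<in> E}"

definition periodic_connected ::
  "nat \<Rightarrow> 'e set \<Rightarrow> ('e \<Rightarrow> nat) \<Rightarrow> ('e \<Rightarrow> nat) \<Rightarrow> ('e \<Rightarrow> 'd::finite \<Rightarrow> int) \<Rightarrow> bool" where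
  "periodic_connected nu E src tgt tau \<longleftrightarrow>
     (\<forall>x y a b. x < nu \<longrightarrow> y < nu \<longrightarrow>
        ((x, a), (y, b)) \<in> (periodic_rel E src tgt tau)\<^sup>*)"

definition fiber_op ::
  "nat \<Rightarrow> 'e set \<Rightarrow> ('e \<Rightarrow> nat) \<Rightarrow> ('e \<Rightarrow> nat) \<Rightarrow> ('e \<Rightarrow> 'd::finite \<Rightarrow> int)
   \<Rightarrow> ('e \<Rightarrow> real) \<Rightarrow> (nat \<Rightarrow> real) \<Rightarrow> ('d \<Rightarrow> real) \<Rightarrow> complex mat" where
  "fiber_op nu E src tgt tau alpha V k =
     mat nu nu (\<lambda>(x, y).
        (\<Sum>e\<in>{e\<in>E. src e = x \<and> tgt e = y}. cis (alpha e + inner_ik (tau e) k))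
        + (if x = y then complex_of_real (V x - real (kappa E src x)) else 0))"

text \<open>lambda_{alpha,j}(k), j = 1..nu: the eigenvalues of the (Hermitian) fiber
 operator, counted with multiplicity and sorted increasingly.\<close>
definition band_fun ::
  "nat \<Rightarrow> 'e set \<Rightarrow> ('e \<Rightarrow> nat) \<Rightarrow> ('e \<Rightarrow> nat) \<Rightarrow> ('e \<Rightarrow> 'd::finite \<Rightarrow> int)
   \<Rightarrow> ('e \<Rightarrow> real) \<Rightarrow> (nat \<Rightarrow> real) \<Rightarrow> nat \<Rightarrow> ('d \<Rightarrow> real) \<Rightarrow> real" where
  "band_fun nu E src tgt tau alpha V j k =
     sorted_list_of_multiset
       (image_mset Re (proots (char_poly (fiber_op nu E src tgt tau alpha V k)))) ! (j - 1)"

definition band ::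
  "nat \<Rightarrow> 'e set \<Rightarrow> ('e \<Rightarrow> nat) \<Rightarrow> ('e \<Rightarrow> nat) \<Rightarrow> ('e \<Rightarrow> 'd::finite \<Rightarrow> int)
   \<Rightarrow> ('e \<Rightarrow> real) \<Rightarrow> (nat \<Rightarrow> real) \<Rightarrow> nat \<Rightarrow> real set" where
  "band nu E src tgt tau alpha V j = range (band_fun nu E src tgt tau alpha V j)"

text \<open>Modified quotient graph: oriented edges Inl e (e in E) and the added
 loops Inr x (x in V_*).\<close>
definition medges :: "nat \<Rightarrow> 'e set \<Rightarrow> ('e + nat) set" where
  "medges nu E = Inl ` E \<union> Inr ` {..<nu}"

fun msrc :: "('e \<Rightarrow> nat) \<Rightarrow> 'e + nat \<Rightarrow> nat" where
  "msrc src (Inl e) = src e" | "msrc src (Inr x) = x"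

fun mtau :: "('e \<Rightarrow> 'd \<Rightarrow> int) \<Rightarrow> 'e + nat \<Rightarrow> 'd \<Rightarrow> int" where
  "mtau tau (Inl e) = tau e" | "mtau tau (Inr x) = (\<lambda>_. 0)"

fun malpha :: "('e \<Rightarrow> real) \<Rightarrow> 'e + nat \<Rightarrow> real" where
  "malpha alpha (Inl e) = alpha e" | "malpha alpha (Inr x) = 0"

fun momega :: "'e set \<Rightarrow> ('e \<Rightarrow> nat) \<Rightarrow> (nat \<Rightarrow> real) \<Rightarrow> 'e + nat \<Rightarrow> real" where
  "momega E src V (Inl e) = 1"
| "momega E src V (Inr x) = V x - real (kappa E src x)"

definition mcycles ::
  "nat \<Rightarrow> 'e set \<Rightarrow> ('e \<Rightarrow> nat) \<Rightarrow> ('e \<Rightarrow> nat) \<Rightarrow> ('e \<Rightarrow> 'd \<Rightarrow> int)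
   \<Rightarrow> nat \<Rightarrow> ('d \<Rightarrow> int) \<Rightarrow> ('e + nat) list set" where
  "mcycles nu E src tgt tau n m =
     {c. length c = n \<and> set c \<subseteq> medges nu E
         \<and> (\<forall>s<n. msrc tgt (c ! s) = msrc src (c ! ((s + 1) mod n)))
         \<and> (\<lambda>i. \<Sum>s<n. mtau tau (c ! s) i) = m}"

definition Tcoef ::
  "nat \<Rightarrow> 'e set \<Rightarrow> ('e \<Rightarrow> nat) \<Rightarrow> ('e \<Rightarrow> nat) \<Rightarrow> ('e \<Rightarrow> 'd \<Rightarrow> int)
   \<Rightarrow> ('e \<Rightarrow> real) \<Rightarrow> (nat \<Rightarrow> real) \<Rightarrow> nat \<Rightarrow> ('d \<Rightarrow> int) \<Rightarrow> complex" where
  "Tcoef nu E src tgt tau alpha V n m =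
     (\<Sum>c\<in>mcycles nu E src tgt tau n m.
        complex_of_real (\<Prod>s<n. momega E src V (c ! s))
        * cis (- (\<Sum>s<n. malpha alpha (c ! s))))"

end

(* Since the fiber operators H(k) are Hermitian, all bands are degenerate iff the multiset
   of eigenvalues of H(k) does not depend on k.  By Newton's identities a multiset of nu
   complex numbers is determined by its first nu power sums, i.e. by the traces of H(k)^n,
   n = 1..nu.  Expanding H(k)^n along closed walks of the modified quotient graph (whose
   added loops carry the diagonal V - kappa) gives
     tr H(k)^n = sum over m of conj(T(n,m)) * exp(i <m,k>),
   a trigonometric polynomial in k, and such a polynomial is constant iff all its
   coefficients with m <> 0 vanish. *)

theory Submission
  imports Defs "Jordan_Normal_Form.Schur_Decomposition" "HOL-Computational_Algebra.Polynomial_FPS"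
begin

section \<open>Power sums determine a multiset\<close>

definition power_sum :: "'a::comm_semiring_1 multiset \<Rightarrow> nat \<Rightarrow> 'a" where
  "power_sum A j = (\<Sum>a\<in>#A. a ^ j)"

definition poly_of_roots :: "'a::comm_ring_1 multiset \<Rightarrow> 'a poly" where
  "poly_of_roots A = (\<Prod>a\<in>#A. [:- a, 1:])"

definition power_sum_fps :: "'a::comm_semiring_1 multiset \<Rightarrow> 'a fps" where
  "power_sum_fps A = Abs_fps (\<lambda>j. if j = 0 then 0 else power_sum A j)"

lemma poly_of_roots_empty [simp]: "poly_of_roots {#} = 1"
  by (simp add: poly_of_roots_def)

lemma poly_of_roots_add_mset [simp]:
  "poly_of_roots (add_mset a A) = [:- a, 1:] * poly_of_roots A"
  by (simp add: poly_of_roots_def)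

lemma poly_of_roots_nonzero: "poly_of_roots (A :: 'a::idom multiset) \<noteq> 0"
  by (auto simp: poly_of_roots_def prod_mset_zero_iff)

lemma proots_poly_of_roots [simp]: "proots (poly_of_roots A) = A"
  by (induction A) (simp_all add: proots_mult poly_of_roots_nonzero del: mult_pCons_left)

lemma degree_poly_of_roots [simp]: "degree (poly_of_roots (A :: 'a::idom multiset)) = size A"
  by (induction A) (simp_all add: degree_mult_eq poly_of_roots_nonzero del: mult_pCons_left)

lemma coeff_poly_of_roots_size [simp]: "coeff (poly_of_roots (A :: 'a::idom multiset)) (size A) = 1"
proof -
  have "lead_coeff (poly_of_roots A) = 1"
    by (induction A) (simp_all add: lead_coeff_mult del: mult_pCons_left)
  then show ?thesis by simp
qed

lemma reflect_linear_factor: "reflect_poly [:- a, 1:] = [:1, - a :: 'a::comm_ring_1:]"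
  using reflect_poly_pCons'[of "[:1:]" "- a"] by (simp add: monom_Suc monom_0)

lemma geometric_fps_times_linear:
  "(1 - fps_const a * fps_X) * Abs_fps (\<lambda>j. if j = 0 then 0 else a ^ j)
    = fps_const (a :: 'a::comm_ring_1) * fps_X"
proof (rule fps_ext)
  fix n
  show "fps_nth ((1 - fps_const a * fps_X) * Abs_fps (\<lambda>j. if j = 0 then 0 else a ^ j)) n
      = fps_nth (fps_const a * fps_X) n"
    by (cases n) (auto simp: algebra_simps fps_X_mult_nth power_Suc)
qed

text \<open>Newton's identities in generating-function form: the reflected polynomial
  \<open>Q(X) = \<Prod>(1 - a X)\<close> satisfies \<open>-X Q'/Q = \<Sum>\<^sub>j p\<^sub>j X\<^sup>j\<close>.\<close>
lemma fps_newton_identity: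
  fixes A :: "'a::idom multiset"
  defines "Q \<equiv> \<lambda>A. fps_of_poly (reflect_poly (poly_of_roots A))"
  shows "fps_X * fps_deriv (Q A) = - Q A * power_sum_fps A"
proof (induction A)
  case empty
  show ?case by (rule fps_ext) (simp add: Q_def power_sum_fps_def power_sum_def)
next
  case (add a A)
  define G where "G = Abs_fps (\<lambda>j. if j = 0 then 0 else a ^ j)"
  have Q_add: "Q (add_mset a A) = (1 - fps_const a * fps_X) * Q A"
    by (simp add: Q_def reflect_poly_mult reflect_linear_factor fps_of_poly_mult fps_of_poly_linear'
        del: mult_pCons_left)
  have S_add: "power_sum_fps (add_mset a A) = power_sum_fps A + G"
    by (rule fps_ext) (simp add: power_sum_fps_def power_sum_def G_def)
  have linear_G: "(1 - fps_const a * fps_X) * G = fps_const a * fps_X"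
    unfolding G_def by (rule geometric_fps_times_linear)
  have "fps_X * fps_deriv (Q (add_mset a A))
      = - (fps_const a * fps_X) * Q A + (1 - fps_const a * fps_X) * (fps_X * fps_deriv (Q A))"
    by (simp add: Q_add fps_deriv_mult algebra_simps)
  also have "\<dots> = - ((1 - fps_const a * fps_X) * G) * Q A
      + (1 - fps_const a * fps_X) * (- Q A * power_sum_fps A)"
    by (simp only: linear_G add.IH)
  also have "\<dots> = - Q (add_mset a A) * power_sum_fps (add_mset a A)"
    by (simp add: Q_add S_add algebra_simps)
  finally show ?case .
qed

lemma newton_coeff_recurrence:
  fixes A :: "'a::idom multiset"
  defines "q \<equiv> coeff (reflect_poly (poly_of_roots A))"
  shows "of_nat n * q n = - (\<Sum>i<n. q i * power_sum A (n - i))"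
proof -
  have "of_nat n * q n
      = fps_nth (fps_X * fps_deriv (fps_of_poly (reflect_poly (poly_of_roots A)))) n"
    by (cases n) (simp_all add: q_def fps_X_mult_nth fps_deriv_nth)
  also have "\<dots> = - (\<Sum>i\<le>n. q i * fps_nth (power_sum_fps A) (n - i))"
    by (simp add: fps_newton_identity fps_mult_nth sum_negf q_def atLeast0AtMost)
  also have "\<dots> = - (\<Sum>i<n. q i * power_sum A (n - i))"
    by (simp add: power_sum_fps_def flip: lessThan_Suc_atMost)
  finally show ?thesis .
qed

lemma reflect_poly_of_roots_eq_if_power_sums_eq:
  fixes A B :: "'a::field_char_0 multiset"
  assumes size: "size A = N" "size B = N"
    and power_sums: "\<forall>j\<in>{1..N}. power_sum A j = power_sum B j"
  shows "reflect_poly (poly_of_roots A) = reflect_poly (poly_of_roots B)"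
proof (rule poly_eqI)
  fix k
  let ?qA = "coeff (reflect_poly (poly_of_roots A))"
    and ?qB = "coeff (reflect_poly (poly_of_roots B))"
  have "?qA k = ?qB k" if "k \<le> N" for k
    using that
  proof (induction k rule: less_induct)
    case (less k)
    show ?case
    proof (cases "k = 0")
      case True
      then show ?thesis by (simp add: coeff_reflect_poly)
    next
      case False
      have "of_nat k * ?qA k = - (\<Sum>i<k. ?qA i * power_sum A (k - i))"
        by (rule newton_coeff_recurrence)
      also have "\<dots> = - (\<Sum>i<k. ?qB i * power_sum B (k - i))"
      proof (intro arg_cong[where f = uminus] sum.cong refl)
        fix i assume "i \<in> {..<k}"
        then have "i < k" "i \<le> N" "k - i \<in> {1..N}"
          using less.prems by auto
        then show "?qA i * power_sum A (k - i) = ?qB i * power_sum B (k - i)"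
          using less.IH power_sums by simp
      qed
      also have "\<dots> = of_nat k * ?qB k"
        by (rule newton_coeff_recurrence[symmetric])
      finally show ?thesis using False by simp
    qed
  qed
  moreover have "?qA k = 0" "?qB k = 0" if "k > N"
    using that size by (simp_all add: coeff_reflect_poly)
  ultimately show "?qA k = ?qB k"
    by (cases "k \<le> N") auto
qed

lemma mset_eq_iff_power_sums_eq:
  fixes A B :: "'a::field_char_0 multiset"
  assumes "size A = size B"
  shows "A = B \<longleftrightarrow> (\<forall>j\<in>{1..size A}. power_sum A j = power_sum B j)"
proof
  assume "\<forall>j\<in>{1..size A}. power_sum A j = power_sum B j"
  then have reflect_eq: "reflect_poly (poly_of_roots A) = reflect_poly (poly_of_roots B)"
    using assms by (intro reflect_poly_of_roots_eq_if_power_sums_eq) auto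
  have coeff_via_reflect:
    "coeff (poly_of_roots C) i = coeff (reflect_poly (poly_of_roots C)) (size C - i)"
    if "i \<le> size C" for C :: "'a multiset" and i
    using that by (simp add: coeff_reflect_poly)
  have "poly_of_roots A = poly_of_roots B"
  proof (rule poly_eqI)
    fix i
    show "coeff (poly_of_roots A) i = coeff (poly_of_roots B) i"
    proof (cases "i \<le> size A")
      case True
      then show ?thesis
        using coeff_via_reflect[of i A] coeff_via_reflect[of i B] reflect_eq assms by simp
    qed (use assms in \<open>simp add: coeff_eq_0\<close>)
  qed
  then show "A = B"
    by (metis proots_poly_of_roots)
qed simp

section \<open>Traces and spectra of complex matrices\<close>

definition trace :: "'a::comm_monoid_add mat \<Rightarrow> 'a" where
  "trace A = (\<Sum>i<dim_row A. A $$ (i, i))"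

lemma trace_mult_comm:
  fixes A B :: "'a::comm_semiring_0 mat"
  assumes "A \<in> carrier_mat n m" "B \<in> carrier_mat m n"
  shows "trace (A * B) = trace (B * A)"
proof -
  have "trace (A * B) = (\<Sum>i<n. \<Sum>l<m. A $$ (i, l) * B $$ (l, i))"
    using assms by (simp add: trace_def scalar_prod_def lessThan_atLeast0)
  also have "\<dots> = (\<Sum>l<m. \<Sum>i<n. B $$ (l, i) * A $$ (i, l))"
    by (subst sum.swap) (simp add: mult.commute)
  also have "\<dots> = trace (B * A)"
    using assms by (simp add: trace_def scalar_prod_def lessThan_atLeast0)
  finally show ?thesis .
qed

lemma trace_similar_mat_wit:
  fixes A B P Q :: "'a::comm_semiring_1 mat"
  assumes "similar_mat_wit A B P Q"
  shows "trace A = trace B"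
proof -
  obtain n where carrier: "A \<in> carrier_mat n n" "B \<in> carrier_mat n n" "P \<in> carrier_mat n n"
    "Q \<in> carrier_mat n n" and QP: "Q * P = 1\<^sub>m n" and A: "A = P * B * Q"
    using assms unfolding similar_mat_wit_def Let_def by auto
  have "trace A = trace (P * (B * Q))"
    using A carrier by simp
  also have "\<dots> = trace (B * Q * P)"
    using carrier by (intro trace_mult_comm[of _ n n]) auto
  also have "B * Q * P = B"
    using carrier QP by simp
  finally show ?thesis .
qed

lemma trace_eq_sum_list_diag_mat: "trace A = sum_list (diag_mat A)"
  by (simp add: trace_def diag_mat_def interv_sum_list_conv_sum_set_nat lessThan_atLeast0)

lemma mult_upper_triangular:
  fixes A B :: "'a::semiring_0 mat"
  assumes A: "A \<in> carrier_mat n n" "upper_triangular A"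
    and B: "B \<in> carrier_mat n n" "upper_triangular B"
  shows "upper_triangular (A * B)" and "i < n \<Longrightarrow> (A * B) $$ (i, i) = A $$ (i, i) * B $$ (i, i)"
proof -
  have entry: "(A * B) $$ (i, j) = (\<Sum>l<n. A $$ (i, l) * B $$ (l, j))" if "i < n" "j < n" for i j
    using that A B by (simp add: scalar_prod_def lessThan_atLeast0)
  have vanish: "A $$ (i, l) * B $$ (l, j) = 0" if "l < i \<or> j < l" "i < n" "l < n" for i j l
    using that upper_triangularD[OF A(2), of l i] upper_triangularD[OF B(2), of j l] A B by auto
  show "upper_triangular (A * B)"
  proof (rule upper_triangularI)
    fix i j assume "j < i" "i < dim_row (A * B)"
    then show "(A * B) $$ (i, j) = 0"
      using A entry by (auto intro!: sum.neutral vanish)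
  qed
  assume "i < n"
  then have "(A * B) $$ (i, i) = (\<Sum>l\<in>{i}. A $$ (i, l) * B $$ (l, i))"
    unfolding entry[OF \<open>i < n\<close> \<open>i < n\<close>] using vanish
    by (intro sum.mono_neutral_right) (auto simp: nat_neq_iff)
  then show "(A * B) $$ (i, i) = A $$ (i, i) * B $$ (i, i)" by simp
qed

lemma pow_upper_triangular:
  fixes B :: "'a::semiring_1 mat"
  assumes B: "B \<in> carrier_mat n n" "upper_triangular B"
  shows "upper_triangular (B ^\<^sub>m k) \<and> (\<forall>i<n. (B ^\<^sub>m k) $$ (i, i) = B $$ (i, i) ^ k)"
proof (induction k)
  case 0
  then show ?case using B by simp
next
  case (Suc k)
  have "B ^\<^sub>m k \<in> carrier_mat n n" using B by simp
  then show ?case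
    using Suc mult_upper_triangular[of "B ^\<^sub>m k" n B] B by (auto simp: power_commutes)
qed

lemma char_poly_factorized_proots:
  fixes A :: "complex mat"
  assumes "A \<in> carrier_mat n n"
  obtains es where "char_poly A = (\<Prod>a\<leftarrow>es. [:- a, 1:])" "proots (char_poly A) = mset es"
    "length es = n"
proof -
  obtain es where es: "char_poly A = (\<Prod>a\<leftarrow>es. [:- a, 1:])" "length es = n"
    using char_poly_factorized[OF assms] by blast
  have "char_poly A = poly_of_roots (mset es)"
    unfolding es(1) poly_of_roots_def by (simp flip: prod_mset_prod_list)
  then show thesis
    by (intro that[of es] es) simp
qed

lemma size_proots_char_poly:
  fixes A :: "complex mat"
  assumes "A \<in> carrier_mat n n"
  shows "size (proots (char_poly A)) = n"
  using char_poly_factorized_proots[OF assms] by (metis size_mset)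

lemma trace_pow_eq_power_sum_eigenvalues:
  fixes A :: "complex mat"
  assumes A: "A \<in> carrier_mat n n"
  shows "trace (A ^\<^sub>m k) = power_sum (proots (char_poly A)) k"
proof -
  obtain es where es: "char_poly A = (\<Prod>a\<leftarrow>es. [:- a, 1:])" "proots (char_poly A) = mset es"
    using char_poly_factorized_proots[OF A] by metis
  obtain B P Q where schur: "schur_decomposition A es = (B, P, Q)"
    by (cases "schur_decomposition A es") auto
  from schur_decomposition[OF A es(1) schur]
  have sim: "similar_mat_wit A B P Q" and B: "upper_triangular B" "diag_mat B = es" by auto
  have B_carrier: "B \<in> carrier_mat n n"
    using sim A unfolding similar_mat_wit_def Let_def by auto
  have "trace (A ^\<^sub>m k) = trace (B ^\<^sub>m k)"
    by (rule trace_similar_mat_wit[OF similar_mat_wit_pow[OF sim]])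
  also have "diag_mat (B ^\<^sub>m k) = map (\<lambda>a. a ^ k) es"
    using pow_upper_triangular[OF B_carrier B(1), of k] B(2) B_carrier by (auto simp: diag_mat_def)
  then have "trace (B ^\<^sub>m k) = power_sum (mset es) k"
    by (simp add: trace_eq_sum_list_diag_mat power_sum_def sum_mset_sum_list flip: mset_map)
  finally show ?thesis using es(2) by simp
qed

lemma eigenvalues_const_iff_trace_pows_const:
  fixes A :: "'k \<Rightarrow> complex mat"
  assumes "\<And>k. A k \<in> carrier_mat n n"
  shows "(\<forall>k. proots (char_poly (A k)) = proots (char_poly (A k0)))
    \<longleftrightarrow> (\<forall>j\<in>{1..n}. \<forall>k. trace (A k ^\<^sub>m j) = trace (A k0 ^\<^sub>m j))"
proof -
  have "proots (char_poly (A k)) = proots (char_poly (A k0))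
      \<longleftrightarrow> (\<forall>j\<in>{1..n}. trace (A k ^\<^sub>m j) = trace (A k0 ^\<^sub>m j))" for k
    using mset_eq_iff_power_sums_eq[of "proots (char_poly (A k))" "proots (char_poly (A k0))"]
    by (simp add: size_proots_char_poly[OF assms] trace_pow_eq_power_sum_eigenvalues[OF assms])
  then show ?thesis
    by blast
qed

lemma hermitian_quadratic_form_real:
  fixes A :: "complex mat"
  assumes hermitian: "\<And>i j. i < n \<Longrightarrow> j < n \<Longrightarrow> A $$ (j, i) = cnj (A $$ (i, j))"
  shows "(\<Sum>i<n. cnj (v $ i) * (\<Sum>j<n. A $$ (i, j) * v $ j)) \<in> \<real>"
proof -
  let ?form = "\<Sum>i<n. cnj (v $ i) * (\<Sum>j<n. A $$ (i, j) * v $ j)"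
  have "cnj ?form = (\<Sum>i<n. v $ i * (\<Sum>j<n. cnj (A $$ (i, j)) * cnj (v $ j)))"
    by (simp add: cnj_sum)
  also have "\<dots> = (\<Sum>i<n. \<Sum>j<n. v $ i * A $$ (j, i) * cnj (v $ j))"
    by (simp add: hermitian[symmetric] sum_distrib_left ac_simps)
  also have "\<dots> = ?form"
    by (subst sum.swap) (simp add: sum_distrib_left ac_simps)
  finally show ?thesis
    by (simp add: Reals_cnj_iff)
qed

lemma hermitian_eigenvalue_real:
  fixes A :: "complex mat"
  assumes A: "A \<in> carrier_mat n n"
    and hermitian: "\<And>i j. i < n \<Longrightarrow> j < n \<Longrightarrow> A $$ (j, i) = cnj (A $$ (i, j))"
    and "eigenvalue A a"
  shows "a \<in> \<real>"
proof -
  obtain v where v: "v \<in> carrier_vec n" "v \<noteq> 0\<^sub>v n" and Av: "A *\<^sub>v v = a \<cdot>\<^sub>v v"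
    using assms(3) A unfolding eigenvalue_def eigenvector_def by auto
  define norm2 where "norm2 = (\<Sum>i<n. cnj (v $ i) * v $ i)"
  have "(\<Sum>j<n. A $$ (i, j) * v $ j) = a * v $ i" if "i < n" for i
    using arg_cong[OF Av, of "\<lambda>w. w $ i"] that A v by (simp add: scalar_prod_def lessThan_atLeast0)
  then have "(\<Sum>i<n. cnj (v $ i) * (\<Sum>j<n. A $$ (i, j) * v $ j)) = a * norm2"
    by (simp add: norm2_def sum_distrib_left ac_simps)
  then have "a * norm2 \<in> \<real>"
    using hermitian_quadratic_form_real[where A = A and n = n and v = v, OF hermitian] by simp
  have norm2_real: "norm2 = of_real (\<Sum>i<n. (cmod (v $ i))\<^sup>2)"
    unfolding norm2_def of_real_sum
    by (intro sum.cong refl) (subst complex_norm_square, simp add: mult.commute)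
  have "\<exists>i<n. v $ i \<noteq> 0"
  proof (rule ccontr)
    assume "\<not> (\<exists>i<n. v $ i \<noteq> 0)"
    then have "v = 0\<^sub>v n"
      using v(1) by (intro eq_vecI) auto
    then show False
      using v(2) by simp
  qed
  then obtain i where "i < n" "v $ i \<noteq> 0"
    by blast
  then have "(\<Sum>i<n. (cmod (v $ i))\<^sup>2) > 0"
    by (intro sum_pos2[of _ i]) auto
  then have "norm2 \<noteq> 0" "norm2 \<in> \<real>"
    unfolding norm2_real of_real_eq_0_iff by auto
  then show "a \<in> \<real>"
    using \<open>a * norm2 \<in> \<real>\<close> Reals_divide[of "a * norm2" norm2] by simp
qed

lemma eigenvalues_hermitian_real:
  fixes A :: "complex mat"
  assumes A: "A \<in> carrier_mat n n"
    and hermitian: "\<And>i j. i < n \<Longrightarrow> j < n \<Longrightarrow> A $$ (j, i) = cnj (A $$ (i, j))"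
  shows "\<forall>a\<in>#proots (char_poly A). a \<in> \<real>"
proof
  fix a assume "a \<in># proots (char_poly A)"
  moreover have "char_poly A \<noteq> 0"
    using degree_monic_char_poly[OF A] by auto
  ultimately have "eigenvalue A a"
    using eigenvalue_root_char_poly[OF A] by simp
  then show "a \<in> \<real>"
    using hermitian_eigenvalue_real[OF A hermitian] by blast
qed

lemma image_mset_Re_eq_iff:
  assumes "\<forall>a\<in>#M. a \<in> \<real>" "\<forall>a\<in>#M'. a \<in> \<real>"
  shows "image_mset Re M = image_mset Re M' \<longleftrightarrow> M = M'"
proof -
  have inverse: "image_mset of_real (image_mset Re N) = N" if "\<forall>a\<in>#N. a \<in> \<real>" for N
    using that by (induction N) auto
  show ?thesis
    by (metis inverse[OF assms(1)] inverse[OF assms(2)])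
qed

lemma singleton_bands_iff_const_mset:
  fixes M :: "'k \<Rightarrow> complex multiset"
  assumes size: "\<And>k. size (M k) = n" and real: "\<And>k. \<forall>a\<in>#M k. a \<in> \<real>"
  shows "(\<forall>j\<in>{1..n}. \<exists>c. range (\<lambda>k. sorted_list_of_multiset (image_mset Re (M k)) ! (j - 1)) = {c})
    \<longleftrightarrow> (\<forall>k. M k = M k0)"
proof -
  let ?L = "\<lambda>k. sorted_list_of_multiset (image_mset Re (M k))"
  have length: "length (?L k) = n" for k
    using size by (metis mset_sorted_list_of_multiset size_image_mset size_mset)
  have reindex: "(\<forall>j\<in>{1..n}. P (j - 1)) \<longleftrightarrow> (\<forall>i<n. P i)" for P
    unfolding image_Suc_lessThan[symmetric] by auto
  have singleton_range: "(\<exists>c. range f = {c}) \<longleftrightarrow> (\<forall>k. f k = f k0)" for f :: "'k \<Rightarrow> real"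
    by (auto simp: set_eq_iff) (metis rangeI singletonD)
  have "(\<forall>j\<in>{1..n}. \<exists>c. range (\<lambda>k. ?L k ! (j - 1)) = {c})
      \<longleftrightarrow> (\<forall>i<n. \<exists>c. range (\<lambda>k. ?L k ! i) = {c})"
    using reindex[of "\<lambda>i. \<exists>c. range (\<lambda>k. ?L k ! i) = {c}"] by simp
  also have "\<dots> \<longleftrightarrow> (\<forall>i<n. \<forall>k. ?L k ! i = ?L k0 ! i)"
    by (simp only: singleton_range)
  also have "\<dots> \<longleftrightarrow> (\<forall>k. ?L k = ?L k0)"
    by (auto simp: list_eq_iff_nth_eq length)
  also have "\<dots> \<longleftrightarrow> (\<forall>k. M k = M k0)"
  proof -
    have "?L k = ?L k0 \<longleftrightarrow> image_mset Re (M k) = image_mset Re (M k0)" for k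
    proof
      assume "?L k = ?L k0"
      then have "mset (?L k) = mset (?L k0)"
        by (rule arg_cong)
      then show "image_mset Re (M k) = image_mset Re (M k0)"
        by simp
    qed simp
    then show ?thesis
      using image_mset_Re_eq_iff[OF real real] by simp
  qed
  finally show ?thesis .
qed

section \<open>Walks in a weighted digraph\<close>

definition weighted_adjacency_mat ::
  "nat \<Rightarrow> ('a \<Rightarrow> nat) \<Rightarrow> ('a \<Rightarrow> nat) \<Rightarrow> 'a set \<Rightarrow> ('a \<Rightarrow> 'b::comm_monoid_add) \<Rightarrow> 'b mat" where
  "weighted_adjacency_mat n s t M w = mat n n (\<lambda>(x, y). \<Sum>e\<in>{e\<in>M. s e = x \<and> t e = y}. w e)"

text \<open>A walk is a list of edges, each one starting where the previous one ends:
  its vertex sequence can be read off both as the sources followed by the final vertex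
  and as the initial vertex followed by the targets.\<close>
definition walks :: "('a \<Rightarrow> 'v) \<Rightarrow> ('a \<Rightarrow> 'v) \<Rightarrow> 'a set \<Rightarrow> nat \<Rightarrow> 'v \<Rightarrow> 'v \<Rightarrow> 'a list set" where
  "walks s t M k x y = {c. length c = k \<and> set c \<subseteq> M \<and> x # map t c = map s c @ [y]}"

definition closed_walks :: "('a \<Rightarrow> 'v) \<Rightarrow> ('a \<Rightarrow> 'v) \<Rightarrow> 'a set \<Rightarrow> nat \<Rightarrow> 'a list set" where
  "closed_walks s t M k = {c. length c = k \<and> set c \<subseteq> M \<and> map t c = rotate1 (map s c)}"

lemma weighted_adjacency_mat_carrier: "weighted_adjacency_mat n s t M w \<in> carrier_mat n n"
  by (simp add: weighted_adjacency_mat_def)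

lemma walks_0: "walks s t M 0 x y = (if x = y then {[]} else {})"
  by (auto simp: walks_def)

lemma walks_Suc:
  "walks s t M (Suc k) x y = (\<lambda>(e, c). e # c) ` (SIGMA e:{e\<in>M. s e = x}. walks s t M k (t e) y)"
  by (auto simp: walks_def length_Suc_conv image_iff)

lemma finite_walks: "finite M \<Longrightarrow> finite (walks s t M k x y)"
  by (rule finite_subset[OF _ finite_lists_length_eq[of M k]]) (auto simp: walks_def)

lemma finite_closed_walks: "finite M \<Longrightarrow> finite (closed_walks s t M k)"
  by (rule finite_subset[OF _ finite_lists_length_eq[of M k]]) (auto simp: closed_walks_def)

lemma walks_eq_closed_walks_at:
  assumes "k \<ge> 1"
  shows "walks s t M k x x = {c\<in>closed_walks s t M k. s (hd c) = x}"
proof -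
  have "x # map t c = map s c @ [x] \<longleftrightarrow> map t c = rotate1 (map s c) \<and> s (hd c) = x"
    if "c \<noteq> []" for c
    using that by (cases c) auto
  moreover have "length c = k \<Longrightarrow> c \<noteq> []" for c :: "'a list"
    using assms by auto
  ultimately show ?thesis
    by (auto simp: walks_def closed_walks_def)
qed

lemma map_eq_rotate1_iff:
  "map t c = rotate1 (map s c) \<longleftrightarrow> (\<forall>i<length c. t (c ! i) = s (c ! (Suc i mod length c)))"
proof -
  have "rotate1 (map s c) ! i = s (c ! (Suc i mod length c))" if "i < length c" for i
  proof -
    have "Suc i mod length c < length c"
      using that by (intro mod_less_divisor) auto
    then show ?thesis
      using that by (simp add: nth_rotate1)
  qed
  then show ?thesis
    by (subst list_eq_iff_nth_eq) auto
qed

lemma pow_mat_Suc_left: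
  assumes "A \<in> carrier_mat n n"
  shows "A ^\<^sub>m Suc k = A * A ^\<^sub>m k"
proof (induction k)
  case 0
  then show ?case using assms by simp
next
  case (Suc k)
  have "A ^\<^sub>m Suc (Suc k) = (A * A ^\<^sub>m k) * A"
    using Suc by simp
  also have "\<dots> = A * (A ^\<^sub>m k * A)"
    using assms by (intro assoc_mult_mat) auto
  finally show ?case by simp
qed

lemma weighted_adjacency_mat_pow:
  fixes w :: "'a \<Rightarrow> 'b::comm_semiring_1"
  assumes M: "finite M" and edges: "\<forall>e\<in>M. s e < n \<and> t e < n"
  shows "x < n \<Longrightarrow> y < n \<Longrightarrow> (weighted_adjacency_mat n s t M w ^\<^sub>m k) $$ (x, y)
    = (\<Sum>c\<in>walks s t M k x y. prod_list (map w c))"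
proof (induction k arbitrary: x)
  case 0
  then show ?case by (simp add: walks_0 weighted_adjacency_mat_def)
next
  case (Suc k)
  let ?W = "weighted_adjacency_mat n s t M w"
  let ?walk_sum = "\<lambda>z. \<Sum>c\<in>walks s t M k z y. prod_list (map w c)"
  have W: "?W \<in> carrier_mat n n"
    by (rule weighted_adjacency_mat_carrier)
  have "(?W ^\<^sub>m Suc k) $$ (x, y) = (\<Sum>z<n. ?W $$ (x, z) * (?W ^\<^sub>m k) $$ (z, y))"
    unfolding pow_mat_Suc_left[OF W] using W Suc.prems
    by (simp add: scalar_prod_def lessThan_atLeast0)
  also have "\<dots> = (\<Sum>z<n. \<Sum>e\<in>{e\<in>{e\<in>M. s e = x}. t e = z}. w e * ?walk_sum (t e))"
    using Suc
    by (auto simp: weighted_adjacency_mat_def sum_distrib_right conj_commute intro!: sum.cong)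
  also have "\<dots> = (\<Sum>e\<in>{e\<in>M. s e = x}. w e * ?walk_sum (t e))"
    using M edges by (intro sum.group) auto
  also have "\<dots> = (\<Sum>(e, c)\<in>(SIGMA e:{e\<in>M. s e = x}. walks s t M k (t e) y).
      w e * prod_list (map w c))"
    unfolding sum_distrib_left using M finite_walks[OF M] by (intro sum.Sigma) auto
  also have "\<dots> = (\<Sum>c\<in>walks s t M (Suc k) x y. prod_list (map w c))"
    unfolding walks_Suc by (subst sum.reindex) (auto simp: inj_on_def case_prod_unfold)
  finally show ?case .
qed

lemma trace_weighted_adjacency_mat_pow:
  fixes w :: "'a \<Rightarrow> 'b::comm_semiring_1"
  assumes M: "finite M" and edges: "\<forall>e\<in>M. s e < n \<and> t e < n" and "k \<ge> 1"
  shows "trace (weighted_adjacency_mat n s t M w ^\<^sub>m k)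
    = (\<Sum>c\<in>closed_walks s t M k. prod_list (map w c))"
proof -
  have "trace (weighted_adjacency_mat n s t M w ^\<^sub>m k)
      = (\<Sum>x<n. \<Sum>c\<in>{c\<in>closed_walks s t M k. s (hd c) = x}. prod_list (map w c))"
    unfolding trace_def pow_mat_dim_square[OF weighted_adjacency_mat_carrier]
    by (intro sum.cong refl)
      (simp add: weighted_adjacency_mat_pow[OF M edges] walks_eq_closed_walks_at[OF \<open>k \<ge> 1\<close>])
  also have "\<dots> = (\<Sum>c\<in>closed_walks s t M k. prod_list (map w c))"
  proof (rule sum.group[OF finite_closed_walks[OF M] finite_lessThan])
    show "(\<lambda>c. s (hd c)) ` closed_walks s t M k \<subseteq> {..<n}"
    proof clarify
      fix c assume c: "c \<in> closed_walks s t M k"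
      then have "c \<noteq> []"
        using \<open>k \<ge> 1\<close> by (auto simp: closed_walks_def)
      then have "hd c \<in> M"
        using c hd_in_set[of c] by (auto simp: closed_walks_def)
      then show "s (hd c) < n"
        using edges by simp
    qed
  qed
  finally show ?thesis .
qed

section \<open>Trigonometric polynomials on \<open>\<int>\<^sup>d\<close>\<close>

lemma inner_ik_zero_left [simp]: "inner_ik (\<lambda>_. 0) k = 0"
  by (simp add: inner_ik_def)

lemma inner_ik_uminus: "inner_ik (\<lambda>i. - m i) k = - inner_ik m k"
  by (simp add: inner_ik_def sum_negf)

lemma inner_ik_sum: "inner_ik (\<lambda>i. \<Sum>s\<in>A. m s i) k = (\<Sum>s\<in>A. inner_ik (m s) k)"
  unfolding inner_ik_def by (simp add: sum_distrib_right) (rule sum.swap)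

lemma prod_cis: "(\<Prod>s\<in>A. cis (f s)) = cis (\<Sum>s\<in>A. f s)"
  by (induction A rule: infinite_finite_induct) (simp_all add: cis_mult)

lemma exists_weights_inj_on:
  fixes S :: "('d::finite \<Rightarrow> int) set"
  assumes "finite S"
  shows "\<exists>w. inj_on (\<lambda>m. \<Sum>i\<in>UNIV. m i * w i) S"
proof -
  \<comment> \<open>With \<open>w i = t ^ idx i\<close> the weighted sum is the value at \<open>t\<close> of a polynomial with
    coefficients \<open>m\<close>; distinct \<open>m\<close> give distinct polynomials, which agree at finitely many \<open>t\<close>.\<close>
  obtain idx :: "'d \<Rightarrow> nat" where "inj idx"
    using finite_imp_inj_to_nat_seg[OF finite_UNIV] by blast
  define P :: "('d \<Rightarrow> int) \<Rightarrow> int poly" where "P m = (\<Sum>i\<in>UNIV. monom (m i) (idx i))" for m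
  have coeff_P: "coeff (P m) (idx i) = m i" for m i
    using \<open>inj idx\<close> by (simp add: P_def coeff_sum coeff_monom inj_eq)
  have "P m \<noteq> P m'" if "m \<noteq> m'" for m m'
    using that coeff_P by (metis ext)
  then have "finite {t. poly (P m) t = poly (P m') t}" if "m \<noteq> m'" for m m'
    using that poly_roots_finite[of "P m - P m'"] by simp
  then have "finite (\<Union>(m, m')\<in>{(m, m')\<in>S \<times> S. m \<noteq> m'}. {t. poly (P m) t = poly (P m') t})"
    using assms
    by (intro finite_UN_I finite_subset[OF _ finite_cartesian_product[OF assms assms]]) auto
  from ex_new_if_finite[OF infinite_UNIV_int this]
  obtain t :: int where t: "\<And>m m'. m \<in> S \<Longrightarrow> m' \<in> S \<Longrightarrow> m \<noteq> m' \<Longrightarrow> poly (P m) t \<noteq> poly (P m') t"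
    by auto
  have "poly (P m) t = (\<Sum>i\<in>UNIV. m i * t ^ idx i)" for m
    by (simp add: P_def poly_sum poly_monom)
  then have "inj_on (\<lambda>m. \<Sum>i\<in>UNIV. m i * t ^ idx i) S"
    using t by (auto intro: inj_onI)
  then show ?thesis
    by (intro exI[of _ "\<lambda>i. t ^ idx i"])
qed

lemma poly_eq_0_if_vanishes_on_circle:
  fixes P :: "complex poly"
  assumes "\<And>s. poly P (cis s) = 0"
  shows "P = 0"
proof (rule ccontr)
  assume "P \<noteq> 0"
  then have "finite (cis ` {0..pi})"
    using assms by (intro finite_subset[OF _ poly_roots_finite[of P]]) auto
  moreover have "inj_on cis {0..pi}"
    by (rule inj_onI) (metis atLeastAtMost_iff cis.sel(1) cos_inj_pi)
  ultimately show False
    using finite_imageD infinite_Icc[OF pi_gt_zero] by blast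
qed

lemma trig_poly_1d_const_imp_coeff_zero:
  fixes a :: "'m \<Rightarrow> complex" and N :: "'m \<Rightarrow> int"
  assumes "finite S" and "inj_on N S"
    and const: "\<And>s::real. (\<Sum>m\<in>S. a m * cis (s * N m)) = C"
    and "m0 \<in> S" and "N m0 \<noteq> 0"
  shows "a m0 = 0"
proof -
  define L where "L = (\<Sum>m\<in>S. \<bar>N m\<bar>)"
  have shift: "N m + L \<ge> 0" "L \<ge> 0" if "m \<in> S" for m
    using member_le_sum[of m S "\<lambda>m. \<bar>N m\<bar>"] that assms(1) by (auto simp: L_def)
  \<comment> \<open>Multiplying by \<open>z ^ L\<close> turns the trigonometric polynomial into an ordinary one
    vanishing on the unit circle.\<close>
  define P where "P = (\<Sum>m\<in>S. monom (a m) (nat (N m + L))) - monom C (nat L)"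
  have "poly P (cis s) = ((\<Sum>m\<in>S. a m * cis (s * N m)) - C) * cis (s * L)" for s
  proof -
    have "cis s ^ nat (N m + L) = cis (s * N m) * cis (s * L)" if "m \<in> S" for m
      using shift[OF that] by (simp add: DeMoivre cis_mult algebra_simps)
    moreover have "cis s ^ nat L = cis (s * L)"
      using shift \<open>m0 \<in> S\<close> by (simp add: DeMoivre mult.commute)
    ultimately show ?thesis
      by (simp add: P_def poly_sum poly_monom sum_distrib_right left_diff_distrib mult.assoc)
  qed
  then have "P = 0"
    using const by (intro poly_eq_0_if_vanishes_on_circle) simp
  have "coeff P (nat (N m0 + L)) = a m0"
  proof -
    have "nat (N m + L) = nat (N m0 + L) \<longleftrightarrow> m = m0" if "m \<in> S" for m
      using shift[OF that] shift[OF \<open>m0 \<in> S\<close>] \<open>inj_on N S\<close> that \<open>m0 \<in> S\<close>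
      by (auto simp: eq_nat_nat_iff dest: inj_onD)
    then show ?thesis
      using assms(1,4,5) shift[OF \<open>m0 \<in> S\<close>]
      by (simp add: P_def coeff_sum coeff_monom if_distrib sum.delta')
  qed
  then show ?thesis
    using \<open>P = 0\<close> by simp
qed

lemma trig_poly_const_iff:
  fixes a :: "('d::finite \<Rightarrow> int) \<Rightarrow> complex"
  assumes "finite S"
  shows "(\<forall>k. (\<Sum>m\<in>S. a m * cis (inner_ik m k)) = (\<Sum>m\<in>S. a m * cis (inner_ik m (\<lambda>_. 0))))
    \<longleftrightarrow> (\<forall>m\<in>S. m \<noteq> (\<lambda>_. 0) \<longrightarrow> a m = 0)"
proof
  assume const: "\<forall>k. (\<Sum>m\<in>S. a m * cis (inner_ik m k)) = (\<Sum>m\<in>S. a m * cis (inner_ik m (\<lambda>_. 0)))"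
  obtain w where inj: "inj_on (\<lambda>m. \<Sum>i\<in>UNIV. m i * w i) (insert (\<lambda>_. 0) S)"
    using exists_weights_inj_on[of "insert (\<lambda>_. 0) S"] assms by auto
  define N where "N = (\<lambda>m :: 'd \<Rightarrow> int. \<Sum>i\<in>UNIV. m i * w i)"
  have "inner_ik m (\<lambda>i. s * w i) = s * N m" for m and s :: real
    by (simp add: inner_ik_def N_def sum_distrib_left algebra_simps)
  then have const_1d: "(\<Sum>m\<in>S. a m * cis (s * N m)) = (\<Sum>m\<in>S. a m * cis (inner_ik m (\<lambda>_. 0)))"
    for s :: real
    using const[rule_format, of "\<lambda>i. s * w i"] by simp
  have N_nonzero: "N m \<noteq> 0" if "m \<in> S" "m \<noteq> (\<lambda>_. 0)" for m
    using inj_onD[OF inj, of m "\<lambda>_. 0"] that by (auto simp: N_def)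
  have inj_N: "inj_on N S"
    unfolding N_def using inj_on_subset[OF inj subset_insertI] .
  show "\<forall>m\<in>S. m \<noteq> (\<lambda>_. 0) \<longrightarrow> a m = 0"
  proof (intro ballI impI)
    fix m assume "m \<in> S" "m \<noteq> (\<lambda>_. 0)"
    then show "a m = 0"
      using trig_poly_1d_const_imp_coeff_zero[OF assms inj_N const_1d] N_nonzero by blast
  qed
next
  assume "\<forall>m\<in>S. m \<noteq> (\<lambda>_. 0) \<longrightarrow> a m = 0"
  then have same_term: "a m * cis (inner_ik m k) = a m * cis (inner_ik m (\<lambda>_. 0))"
    if "m \<in> S" for m k
    using that by (cases "m = (\<lambda>_. 0)") auto
  then show "\<forall>k. (\<Sum>m\<in>S. a m * cis (inner_ik m k)) = (\<Sum>m\<in>S. a m * cis (inner_ik m (\<lambda>_. 0)))"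
    by (intro allI sum.cong refl same_term)
qed

section \<open>The fiber operator as a weighted adjacency matrix\<close>

lemma finite_medges: "finite E \<Longrightarrow> finite (medges nu E)"
  by (simp add: medges_def)

lemma medges_bounded:
  "\<forall>e\<in>E. src e < nu \<and> tgt e < nu \<Longrightarrow> \<forall>e\<in>medges nu E. msrc src e < nu \<and> msrc tgt e < nu"
  by (auto simp: medges_def)

definition fiber_weight ::
  "'e set \<Rightarrow> ('e \<Rightarrow> nat) \<Rightarrow> ('e \<Rightarrow> 'd::finite \<Rightarrow> int) \<Rightarrow> ('e \<Rightarrow> real) \<Rightarrow> (nat \<Rightarrow> real)
    \<Rightarrow> ('d \<Rightarrow> real) \<Rightarrow> 'e + nat \<Rightarrow> complex" where
  "fiber_weight E src tau alpha V k e =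
    of_real (momega E src V e) * cis (malpha alpha e + inner_ik (mtau tau e) k)"

lemma fiber_op_eq_weighted_adjacency_mat:
  assumes "finite E"
  shows "fiber_op nu E src tgt tau alpha V k
    = weighted_adjacency_mat nu (msrc src) (msrc tgt) (medges nu E)
        (fiber_weight E src tau alpha V k)"
proof (rule eq_matI)
  let ?w = "fiber_weight E src tau alpha V k"
  fix x y assume "x < dim_row (weighted_adjacency_mat nu (msrc src) (msrc tgt) (medges nu E) ?w)"
    and "y < dim_col (weighted_adjacency_mat nu (msrc src) (msrc tgt) (medges nu E) ?w)"
  then have x: "x < nu" and y: "y < nu"
    by (simp_all add: weighted_adjacency_mat_def)
  have "{e\<in>medges nu E. msrc src e = x \<and> msrc tgt e = y}
      = Inl ` {e\<in>E. src e = x \<and> tgt e = y} \<union> Inr ` (if x = y then {x} else {})"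
    using x by (auto simp: medges_def)
  then have "(\<Sum>e\<in>{e\<in>medges nu E. msrc src e = x \<and> msrc tgt e = y}. ?w e)
      = (\<Sum>e\<in>{e\<in>E. src e = x \<and> tgt e = y}. ?w (Inl e))
        + (\<Sum>z\<in>(if x = y then {x} else {}). ?w (Inr z))"
    using assms
    by (cases "x = y") (simp_all add: sum.union_disjoint disjoint_iff sum.reindex image_iff)
  then show "fiber_op nu E src tgt tau alpha V k $$ (x, y)
      = weighted_adjacency_mat nu (msrc src) (msrc tgt) (medges nu E) ?w $$ (x, y)"
    using x y by (simp add: fiber_op_def weighted_adjacency_mat_def fiber_weight_def)
qed (simp_all add: fiber_op_def weighted_adjacency_mat_def)

lemma fiber_op_hermitian:
  assumes flip: "\<forall>e\<in>E. flip e \<in> E \<and> flip (flip e) = e \<and> src (flip e) = tgt e \<and> tgt (flip e) = src e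
      \<and> tau (flip e) = (\<lambda>i. - tau e i) \<and> alpha (flip e) = - alpha e"
    and "i < nu" "j < nu"
  shows "fiber_op nu E src tgt tau alpha V k $$ (j, i)
    = cnj (fiber_op nu E src tgt tau alpha V k $$ (i, j))"
proof -
  have "(\<Sum>e\<in>{e\<in>E. src e = j \<and> tgt e = i}. cis (alpha e + inner_ik (tau e) k))
      = (\<Sum>e\<in>{e\<in>E. src e = i \<and> tgt e = j}. cis (- (alpha e + inner_ik (tau e) k)))"
    using flip
    by (intro sum.reindex_bij_witness[of _ flip flip]) (auto simp: inner_ik_uminus add.commute)
  then show ?thesis
    using assms(2,3) by (simp add: fiber_op_def cnj_sum cis_cnj)
qed

definition cycle_index :: "('e \<Rightarrow> 'd \<Rightarrow> int) \<Rightarrow> nat \<Rightarrow> ('e + nat) list \<Rightarrow> 'd \<Rightarrow> int" where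
  "cycle_index tau n c = (\<lambda>i. \<Sum>s<n. mtau tau (c ! s) i)"

definition cycle_indices ::
  "nat \<Rightarrow> 'e set \<Rightarrow> ('e \<Rightarrow> nat) \<Rightarrow> ('e \<Rightarrow> nat) \<Rightarrow> ('e \<Rightarrow> 'd \<Rightarrow> int) \<Rightarrow> nat \<Rightarrow> ('d \<Rightarrow> int) set" where
  "cycle_indices nu E src tgt tau n =
    cycle_index tau n ` closed_walks (msrc src) (msrc tgt) (medges nu E) n"

lemma finite_cycle_indices: "finite E \<Longrightarrow> finite (cycle_indices nu E src tgt tau n)"
  unfolding cycle_indices_def by (intro finite_imageI finite_closed_walks finite_medges)

lemma mcycles_eq_closed_walks:
  "mcycles nu E src tgt tau n m
    = {c\<in>closed_walks (msrc src) (msrc tgt) (medges nu E) n. cycle_index tau n c = m}"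
  by (auto simp: mcycles_def closed_walks_def cycle_index_def map_eq_rotate1_iff)

lemma Tcoef_eq_0_if_not_cycle_index:
  assumes "m \<notin> cycle_indices nu E src tgt tau n"
  shows "Tcoef nu E src tgt tau alpha V n m = 0"
proof -
  have "mcycles nu E src tgt tau n m = {}"
    using assms by (auto simp: mcycles_eq_closed_walks cycle_indices_def)
  then show ?thesis
    by (simp add: Tcoef_def)
qed

lemma prod_fiber_weight:
  assumes "length c = n"
  shows "prod_list (map (fiber_weight E src tau alpha V k) c)
    = cis (inner_ik (cycle_index tau n c) k)
      * cnj (of_real (\<Prod>s<n. momega E src V (c ! s)) * cis (- (\<Sum>s<n. malpha alpha (c ! s))))"
proof -
  have "prod_list (map (fiber_weight E src tau alpha V k) c)
      = (\<Prod>s<n. fiber_weight E src tau alpha V k (c ! s))"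
    using assms by (simp add: prod.list_conv_set_nth lessThan_atLeast0)
  also have "\<dots> = of_real (\<Prod>s<n. momega E src V (c ! s))
      * cis (\<Sum>s<n. malpha alpha (c ! s)) * cis (inner_ik (cycle_index tau n c) k)"
    by (simp add: fiber_weight_def prod.distrib prod_cis sum.distrib cycle_index_def inner_ik_sum
        cis_mult mult.assoc)
  finally show ?thesis
    by (simp add: cis_cnj ac_simps)
qed

lemma trace_fiber_op_pow:
  assumes "finite E" and "\<forall>e\<in>E. src e < nu \<and> tgt e < nu" and "n \<ge> 1"
  shows "trace (fiber_op nu E src tgt tau alpha V k ^\<^sub>m n)
    = (\<Sum>m\<in>cycle_indices nu E src tgt tau n.
        cnj (Tcoef nu E src tgt tau alpha V n m) * cis (inner_ik m k))"
proof -
  let ?C = "closed_walks (msrc src) (msrc tgt) (medges nu E) n"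
  define h where
    "h c = of_real (\<Prod>s<n. momega E src V (c ! s)) * cis (- (\<Sum>s<n. malpha alpha (c ! s)))" for c
  have "trace (fiber_op nu E src tgt tau alpha V k ^\<^sub>m n)
      = (\<Sum>c\<in>?C. prod_list (map (fiber_weight E src tau alpha V k) c))"
    unfolding fiber_op_eq_weighted_adjacency_mat[OF assms(1)]
    by (rule trace_weighted_adjacency_mat_pow
        [OF finite_medges[OF assms(1)] medges_bounded[OF assms(2)] assms(3)])
  also have "\<dots> = (\<Sum>c\<in>?C. cis (inner_ik (cycle_index tau n c) k) * cnj (h c))"
    by (intro sum.cong refl) (simp add: prod_fiber_weight h_def closed_walks_def)
  also have "\<dots> = (\<Sum>m\<in>cycle_indices nu E src tgt tau n.
      \<Sum>c\<in>{c\<in>?C. cycle_index tau n c = m}. cis (inner_ik (cycle_index tau n c) k) * cnj (h c))"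
    unfolding cycle_indices_def
    by (rule sum.group[symmetric]) (auto intro: finite_closed_walks finite_medges assms(1))
  also have "\<dots> = (\<Sum>m\<in>cycle_indices nu E src tgt tau n.
      cnj (Tcoef nu E src tgt tau alpha V n m) * cis (inner_ik m k))"
    by (intro sum.cong refl)
      (simp add: Tcoef_def mcycles_eq_closed_walks h_def cnj_sum sum_distrib_left mult.commute)
  finally show ?thesis .
qed

lemma fiber_traces_const_iff_Tcoef_vanish:
  fixes tau :: "'e \<Rightarrow> 'd::finite \<Rightarrow> int"
  assumes "finite E" and "\<forall>e\<in>E. src e < nu \<and> tgt e < nu" and "n \<ge> 1"
  shows "(\<forall>k. trace (fiber_op nu E src tgt tau alpha V k ^\<^sub>m n)
        = trace (fiber_op nu E src tgt tau alpha V (\<lambda>_. 0) ^\<^sub>m n))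
    \<longleftrightarrow> (\<forall>m. m \<noteq> (\<lambda>_. 0) \<longrightarrow> Tcoef nu E src tgt tau alpha V n m = 0)"
proof -
  let ?S = "cycle_indices nu E src tgt tau n" and ?T = "Tcoef nu E src tgt tau alpha V n"
  have "?T m = 0" if "m \<notin> ?S" for m
    using that by (rule Tcoef_eq_0_if_not_cycle_index)
  then have "(\<forall>m\<in>?S. m \<noteq> (\<lambda>_. 0) \<longrightarrow> cnj (?T m) = 0)
      \<longleftrightarrow> (\<forall>m. m \<noteq> (\<lambda>_. 0) \<longrightarrow> ?T m = 0)"
    by (simp only: complex_cnj_zero_iff) blast
  then show ?thesis
    unfolding trace_fiber_op_pow[OF assms]
      trig_poly_const_iff[OF finite_cycle_indices[OF assms(1)]] .
qed

theorem lemma4p3: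
  fixes nu :: nat and E :: "'e set" and src tgt :: "'e \<Rightarrow> nat" and flip :: "'e \<Rightarrow> 'e"
    and tau :: "'e \<Rightarrow> 'd::finite \<Rightarrow> int" and alpha :: "'e \<Rightarrow> real" and V :: "nat \<Rightarrow> real"
  assumes "nu \<ge> 1" and "finite E"
    and "\<forall>e\<in>E. src e < nu \<and> tgt e < nu"
    and "\<forall>e\<in>E. flip e \<in> E \<and> flip (flip e) = e \<and> flip e \<noteq> e
               \<and> src (flip e) = tgt e \<and> tgt (flip e) = src e
               \<and> tau (flip e) = (\<lambda>i. - tau e i) \<and> alpha (flip e) = - alpha e"
    and "periodic_connected nu E src tgt tau"
  shows "(\<forall>j\<in>{1..nu}. \<exists>c. band nu E src tgt tau alpha V j = {c})
     \<longleftrightarrow> (\<forall>n\<in>{1..nu}. \<forall>m. m \<noteq> (\<lambda>_. 0) \<longrightarrow> Tcoef nu E src tgt tau alpha V n m = 0)"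
proof -
  define H where "H k = fiber_op nu E src tgt tau alpha V k" for k
  define spectrum where "spectrum k = proots (char_poly (H k))" for k
  have carrier: "H k \<in> carrier_mat nu nu" for k
    by (simp add: H_def fiber_op_def)
  have size: "size (spectrum k) = nu" for k
    unfolding spectrum_def by (rule size_proots_char_poly[OF carrier])
  have hermitian: "H k $$ (j, i) = cnj (H k $$ (i, j))" if "i < nu" "j < nu" for i j k
    unfolding H_def using assms(4) that by (intro fiber_op_hermitian[of E flip]) auto
  have real: "\<forall>a\<in>#spectrum k. a \<in> \<real>" for k
    unfolding spectrum_def by (rule eigenvalues_hermitian_real[OF carrier hermitian])
  have "(\<forall>j\<in>{1..nu}. \<exists>c. band nu E src tgt tau alpha V j = {c})
      \<longleftrightarrow> (\<forall>k. spectrum k = spectrum (\<lambda>_. 0))"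
    using singleton_bands_iff_const_mset[OF size real]
    by (simp add: band_def band_fun_def spectrum_def H_def)
  also have "\<dots> \<longleftrightarrow> (\<forall>n\<in>{1..nu}. \<forall>k. trace (H k ^\<^sub>m n) = trace (H (\<lambda>_. 0) ^\<^sub>m n))"
    unfolding spectrum_def by (rule eigenvalues_const_iff_trace_pows_const[OF carrier])
  also have "\<dots> \<longleftrightarrow> (\<forall>n\<in>{1..nu}. \<forall>m. m \<noteq> (\<lambda>_. 0) \<longrightarrow> Tcoef nu E src tgt tau alpha V n m = 0)"
    unfolding H_def
    by (intro ball_cong refl fiber_traces_const_iff_Tcoef_vanish[OF assms(2,3)]) simp
  finally show ?thesis .
qed

end
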